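(* Let $S\in\{0,1\}^\infty$. 1. If $\mathrm{Dim}_{\mathrm{FS}}(S)=0$, then $S$ is finite-state shallow. 2. If $S$ is normal (equivalently, $\dim_{\mathrm{FS}}(S)=1$), then $S$ is finite-state shallow.
   Context: A finite-state transducer (FST) is a 4-tuple $T=(Q,\delta,\nu,q_0)$ with $Q$ a nonempty finite set of states, $\delta:Q\times\{0,1\}\to Q$, $\nu:Q\times\{0,1\}\to\{0,1\}^*$, $q_0\in Q$, every state reachable from $q_0$; $\widehat\delta(\lambda)=q_0$, $\widehat\delta(xa)=\delta(\widehat\delta(x),a)$, $T(\lambda)=\lambda$, $T(xa)=T(x)\nu(\widehat\delta(x),a)$. Fix a standard binary representation $\sigma_T$ of each FST, $|T|=|\sigma_T|$, $\mathrm{FST}^{\leq k}=\{T:|T|\le k\}$, and $\mathrm{FS}^k(x)=\min\{|p|:\exists T\in\mathrm{FST}^{\le k},\ T(p)=x\}$. For a sequence $S$, $S\upharpoonright n$ denotes its first $n$ bits. The finite-state dimension and strong dimension are $\dim_{\mathrm{FS}}(S)=\lim_{k\to\infty}\liminf_{n\to\infty}\mathrm{FS}^k(S\upharpoonright n)/n$ and $\mathrm{Dim}_{\mathrm{FS}}(S)=\lim_{k\to\infty}\limsup_{n\to\infty}\mathrm{FS}^k(S\upharpoonright n)/n$. $S$ is normal (in Borel's sense) if for every $k$, every string of length $k$ occurs in $S$ with limiting frequency $2^{-k}$; it is known that $S$ is normal iff $\dim_{\mathrm{FS}}(S)=1$. $S$ is finite-state deep if $(\exists\alpha>0)(\forall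 k\in\mathbb{N})(\exists k'\in\mathbb{N})(\exists^\infty n\in\mathbb{N})\ \mathrm{FS}^k(S\upharpoonright n)-\mathrm{FS}^{k'}(S\upharpoonright n)\ge\alpha n$; $S$ is finite-state shallow if it is not finite-state deep. *)

theory Defs
  imports "HOL-Analysis.Analysis"
begin

(* Bits are booleans (False = 0, True = 1); binary strings are bool lists;
   infinite binary sequences are functions nat => bool. *)

(* A finite-state transducer with state set Q = {0..<length trans} is stored as
   (q0, trans), where  trans ! q = ((delta(q,0), nu(q,0)), (delta(q,1), nu(q,1))). *)
type_synonym fst = "nat \<times> ((nat \<times> bool list) \<times> (nat \<times> bool list)) list"

definition fst_start :: "fst \<Rightarrow> nat" where
  "fst_start T = fst T"

definition fst_nstates :: "fst \<Rightarrow> nat" where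
  "fst_nstates T = length (snd T)"

definition fst_delta :: "fst \<Rightarrow> nat \<Rightarrow> bool \<Rightarrow> nat" where
  "fst_delta T q a = (if a then fst (snd (snd T ! q)) else fst (fst (snd T ! q)))"

definition fst_nu :: "fst \<Rightarrow> nat \<Rightarrow> bool \<Rightarrow> bool list" where
  "fst_nu T q a = (if a then snd (snd (snd T ! q)) else snd (fst (snd T ! q)))"

definition fst_delta_hat :: "fst \<Rightarrow> bool list \<Rightarrow> nat" where
  "fst_delta_hat T x = foldl (fst_delta T) (fst_start T) x"

definition fst_output :: "fst \<Rightarrow> bool list \<Rightarrow> bool list" where
  "fst_output T x = snd (foldl (\<lambda>(q, out) a. (fst_delta T q a, out @ fst_nu T q a))
                               (fst_start T, []) x)"

definition wf_fst :: "fst \<Rightarrow> bool" where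
  "wf_fst T \<longleftrightarrow> fst_nstates T > 0 \<and> fst_start T < fst_nstates T
     \<and> (\<forall>q < fst_nstates T. \<forall>a. fst_delta T q a < fst_nstates T)
     \<and> (\<forall>q < fst_nstates T. \<exists>x. fst_delta_hat T x = q)"

(* sigma is the fixed binary representation of transducers; |T| = length (sigma T).
   FS^k(x) = min{|p| : T in FST^{<=k}, T(p) = x}   (min of the empty set = \<infinity>) *)
definition FS :: "(fst \<Rightarrow> bool list) \<Rightarrow> nat \<Rightarrow> bool list \<Rightarrow> ereal" where
  "FS \<sigma> k x = (INF p \<in> {p. \<exists>T. wf_fst T \<and> length (\<sigma> T) \<le> k \<and> fst_output T p = x}.
                   ereal (real (length p)))"

definition prefix_seq :: "(nat \<Rightarrow> bool) \<Rightarrow> nat \<Rightarrow> bool list" where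
  "prefix_seq S n = map S [0..<n]"

definition dim_FS :: "(fst \<Rightarrow> bool list) \<Rightarrow> (nat \<Rightarrow> bool) \<Rightarrow> ereal" where
  "dim_FS \<sigma> S = lim (\<lambda>k. liminf (\<lambda>n. FS \<sigma> k (prefix_seq S n) / ereal (real n)))"

definition Dim_FS :: "(fst \<Rightarrow> bool list) \<Rightarrow> (nat \<Rightarrow> bool) \<Rightarrow> ereal" where
  "Dim_FS \<sigma> S = lim (\<lambda>k. limsup (\<lambda>n. FS \<sigma> k (prefix_seq S n) / ereal (real n)))"

definition normal_seq :: "(nat \<Rightarrow> bool) \<Rightarrow> bool" where
  "normal_seq S \<longleftrightarrow> (\<forall>k. \<forall>w::bool list. length w = k \<longrightarrow>
     (\<lambda>n. real (card {i. i < n \<and> map S [i..<i+k] = w}) / real n)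
       \<longlonglongrightarrow> 1 / 2 ^ k)"

definition fs_deep :: "(fst \<Rightarrow> bool list) \<Rightarrow> (nat \<Rightarrow> bool) \<Rightarrow> bool" where
  "fs_deep \<sigma> S \<longleftrightarrow> (\<exists>\<alpha>::real. \<alpha> > 0 \<and> (\<forall>k. \<exists>k'. \<exists>\<^sub>\<infinity>n.
      FS \<sigma> k (prefix_seq S n) - FS \<sigma> k' (prefix_seq S n) \<ge> ereal (\<alpha> * real n)))"

definition fs_shallow :: "(fst \<Rightarrow> bool list) \<Rightarrow> (nat \<Rightarrow> bool) \<Rightarrow> bool" where
  "fs_shallow \<sigma> S \<longleftrightarrow> \<not> fs_deep \<sigma> S"

end

theory Submission
  imports Defs
begin

text \<open>
If \<open>Dim_FS S = 0\<close>, then for every \<open>\<alpha> > 0\<close> a single level \<open>k\<close> already has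
\<open>FS\<^sup>k(S\<upharpoonright>n) < \<alpha>n\<close> eventually, and since \<open>FS \<ge> 0\<close> no level \<open>k'\<close> can improve on it by \<open>\<alpha>n\<close>.

If \<open>S\<close> is normal, the identity transducer gives \<open>FS\<^sup>k(S\<upharpoonright>n) \<le> n\<close>, while no transducer
compresses \<open>S\<close>: cut a program \<open>p\<close> with \<open>T(p) = S\<upharpoonright>n\<close> into blocks of length \<open>b\<close>.
A block producing fewer than \<open>d\<close> bits costs at most \<open>d/b\<close> output bits per input bit;
a block producing at least \<open>d\<close> bits yields an occurrence in \<open>S\<upharpoonright>n\<close> of one of at most
\<open>m 2\<^sup>b\<close> words (\<open>m\<close> the number of states), and by normality these occurrences cover
about \<open>n m 2\<^sup>b d/2\<^sup>d\<close> bits. Choosing \<open>d/b\<close> close to 1 and \<open>d - b\<close> large gives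
\<open>|p| \<ge> (1 - \<epsilon>)n\<close>, uniformly over the finitely many transducers of size at most \<open>k'\<close>.
\<close>

primrec fst_output_from :: "fst \<Rightarrow> nat \<Rightarrow> bool list \<Rightarrow> bool list" where
  "fst_output_from T q [] = []"
| "fst_output_from T q (a # x) = fst_nu T q a @ fst_output_from T (fst_delta T q a) x"

lemma foldl_fst_step:
  "foldl (\<lambda>(q, out) a. (fst_delta T q a, out @ fst_nu T q a)) (q, out) x
     = (foldl (fst_delta T) q x, out @ fst_output_from T q x)"
  by (induction x arbitrary: q out) auto

lemma fst_output_eq_output_from: "fst_output T x = fst_output_from T (fst_start T) x"
  by (simp add: fst_output_def foldl_fst_step)

lemma fst_output_from_append:
  "fst_output_from T q (x @ y) = fst_output_from T q x @ fst_output_from T (foldl (fst_delta T) q x) y"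
  by (induction x arbitrary: q) auto

lemma foldl_fst_delta_less:
  "wf_fst T \<Longrightarrow> q < fst_nstates T \<Longrightarrow> foldl (fst_delta T) q x < fst_nstates T"
  by (induction x arbitrary: q) (auto simp: wf_fst_def)

definition nu_bound :: "fst \<Rightarrow> nat" where
  "nu_bound T = (\<Sum>q<fst_nstates T. length (fst_nu T q False) + length (fst_nu T q True))"

lemma length_fst_nu_le: "q < fst_nstates T \<Longrightarrow> length (fst_nu T q a) \<le> nu_bound T"
proof -
  assume q: "q < fst_nstates T"
  have "length (fst_nu T q a) \<le> length (fst_nu T q False) + length (fst_nu T q True)"
    by (cases a) auto
  also have "\<dots> \<le> nu_bound T"
    unfolding nu_bound_def using q by (intro member_le_sum) auto
  finally show ?thesis .
qed

lemma length_fst_output_from_le: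
  "wf_fst T \<Longrightarrow> q < fst_nstates T \<Longrightarrow> length (fst_output_from T q x) \<le> nu_bound T * length x"
proof (induction x arbitrary: q)
  case (Cons a x)
  then have "fst_delta T q a < fst_nstates T" by (auto simp: wf_fst_def)
  with Cons show ?case using length_fst_nu_le[OF Cons.prems(2), of a] by fastforce
qed simp

fun outputs_per_block :: "fst \<Rightarrow> nat \<Rightarrow> bool list list \<Rightarrow> bool list list" where
  "outputs_per_block T q [] = []"
| "outputs_per_block T q (u # us) =
     fst_output_from T q u # outputs_per_block T (foldl (fst_delta T) q u) us"

lemma fst_output_from_concat:
  "fst_output_from T q (concat us) = concat (outputs_per_block T q us)"
  by (induction us arbitrary: q) (auto simp: fst_output_from_append)

lemma length_outputs_per_block [simp]: "length (outputs_per_block T q us) = length us"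
  by (induction us arbitrary: q) auto

definition block_outputs :: "fst \<Rightarrow> nat \<Rightarrow> bool list set" where
  "block_outputs T b = (\<lambda>(q, u). fst_output_from T q u) ` ({..<fst_nstates T} \<times> {u. length u = b})"

lemma fst_output_from_in_block_outputs:
  "q < fst_nstates T \<Longrightarrow> length u = b \<Longrightarrow> fst_output_from T q u \<in> block_outputs T b"
  unfolding block_outputs_def by (rule image_eqI[of _ _ "(q, u)"]) auto

lemma set_outputs_per_block_subset:
  assumes "wf_fst T" "q < fst_nstates T" "\<forall>u\<in>set us. length u = b"
  shows "set (outputs_per_block T q us) \<subseteq> block_outputs T b"
  using assms(2,3)
proof (induction us arbitrary: q)
  case (Cons u us)
  have "foldl (fst_delta T) q u < fst_nstates T" using foldl_fst_delta_less assms(1) Cons.prems(1) .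
  with Cons show ?case by (simp add: fst_output_from_in_block_outputs)
qed simp

lemma finite_block_outputs: "finite (block_outputs T b)"
  unfolding block_outputs_def using finite_lists_length_eq[of "UNIV :: bool set" b] by simp

lemma card_block_outputs_le: "card (block_outputs T b) \<le> fst_nstates T * 2 ^ b"
proof -
  have "card (block_outputs T b) \<le> card ({..<fst_nstates T} \<times> {u :: bool list. length u = b})"
    unfolding block_outputs_def
    using finite_lists_length_eq[of "UNIV :: bool set" b] by (intro card_image_le) simp
  also have "\<dots> = fst_nstates T * 2 ^ b"
    using card_lists_length_eq[of "UNIV :: bool set" b] by (simp add: card_cartesian_product)
  finally show ?thesis .
qed

definition id_fst :: fst where
  "id_fst = (0, [((0, [False]), (0, [True]))])"

lemma wf_id_fst: "wf_fst id_fst"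
  unfolding wf_fst_def id_fst_def fst_nstates_def fst_start_def fst_delta_def fst_delta_hat_def
  by (auto intro: exI[of _ "[]"])

lemma fst_output_id_fst: "fst_output id_fst x = x"
proof -
  have "fst_output_from id_fst 0 x = x"
    by (induction x) (auto simp: id_fst_def fst_delta_def fst_nu_def)
  then show ?thesis by (simp add: fst_output_eq_output_from id_fst_def fst_start_def)
qed

lemma length_prefix_seq [simp]: "length (prefix_seq S n) = n"
  by (simp add: prefix_seq_def)

definition occurrences :: "(nat \<Rightarrow> bool) \<Rightarrow> nat \<Rightarrow> bool list \<Rightarrow> nat" where
  "occurrences S n w = card {i. i < n \<and> map S [i..<i + length w] = w}"

lemma count_list_le_card_occurrences_between:
  assumes "w \<noteq> []" "map S [i..<i + length (concat ws)] = concat ws"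
  shows "count_list ws w
           \<le> card {j. i \<le> j \<and> j < i + length (concat ws) \<and> map S [j..<j + length w] = w}"
  using assms(2)
proof (induction ws arbitrary: i)
  case (Cons v ws)
  define i' where "i' = i + length v"
  let ?occ = "\<lambda>lo hi. {j. lo \<le> j \<and> j < hi \<and> map S [j..<j + length w] = w}"
  have "[i..<i + length (concat (v # ws))] = [i..<i'] @ [i'..<i' + length (concat ws)]"
    using upt_add_eq_append[of i i' "length (concat ws)"] by (simp add: i'_def add.assoc)
  then have "map S [i..<i'] @ map S [i'..<i' + length (concat ws)] = v @ concat ws"
    using Cons.prems by simp
  then have head: "map S [i..<i'] = v" and tail: "map S [i'..<i' + length (concat ws)] = concat ws"
    by (simp_all add: append_eq_append_conv i'_def)
  have IH: "count_list ws w \<le> card (?occ i' (i' + length (concat ws)))"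
    using Cons.IH[OF tail] .
  have sub: "?occ i' (i' + length (concat ws)) \<subseteq> ?occ i (i + length (concat (v # ws)))"
    by (auto simp: i'_def)
  have fin: "finite (?occ i (i + length (concat (v # ws))))" by simp
  show ?case
  proof (cases "v = w")
    case True
    have ins: "insert i (?occ i' (i' + length (concat ws))) \<subseteq> ?occ i (i + length (concat (v # ws)))"
      using sub head True assms(1) by (auto simp: i'_def)
    have "i \<notin> ?occ i' (i' + length (concat ws))"
      using True assms(1) by (simp add: i'_def)
    then have "card (?occ i' (i' + length (concat ws))) + 1 = card (insert i (?occ i' (i' + length (concat ws))))"
      by simp
    also have "\<dots> \<le> card (?occ i (i + length (concat (v # ws))))"
      using card_mono[OF fin ins] .
    finally show ?thesis using IH True by simp
  next
    case False
    then show ?thesis using IH card_mono[OF fin sub] by simp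
  qed
qed simp

lemma count_list_le_occurrences:
  assumes "w \<noteq> []" "concat ws @ v = prefix_seq S n"
  shows "count_list ws w \<le> occurrences S n w"
proof -
  have len: "length (concat ws) \<le> n" using arg_cong[OF assms(2), of length] by simp
  have "map S [0..<0 + length (concat ws)] = concat ws"
    using arg_cong[OF assms(2), of "take (length (concat ws))"] len by (simp add: prefix_seq_def take_map)
  then have "count_list ws w \<le> card {j. 0 \<le> j \<and> j < 0 + length (concat ws) \<and> map S [j..<j + length w] = w}"
    using count_list_le_card_occurrences_between[OF assms(1)] by blast
  also have "\<dots> \<le> occurrences S n w"
    unfolding occurrences_def using len by (intro card_mono) auto
  finally show ?thesis .
qed

definition long_length :: "nat \<Rightarrow> bool list \<Rightarrow> nat" where
  "long_length d w = (if d \<le> length w then length w else 0)"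

lemma split_into_blocks:
  assumes "0 < b"
  shows "\<exists>us r. p = concat us @ r \<and> (\<forall>u\<in>set us. length u = b) \<and> length r < b"
proof (induction p rule: length_induct)
  case (1 p)
  show ?case
  proof (cases "length p < b")
    case True
    then show ?thesis by (intro exI[of _ "[]"] exI[of _ p]) simp
  next
    case False
    with assms have "length (drop b p) < length p" by simp
    then obtain us r where "drop b p = concat us @ r" "\<forall>u\<in>set us. length u = b" "length r < b"
      using "1.IH" by blast
    moreover have "p = take b p @ drop b p" by simp
    ultimately show ?thesis using False
      by (intro exI[of _ "take b p # us"] exI[of _ r]) auto
  qed
qed

lemma length_concat_le_short_long:
  "length (concat ws) \<le> d * length ws + (\<Sum>w\<leftarrow>ws. long_length d w)"
  by (induction ws) (auto simp: long_length_def)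

lemma sum_long_length_le_occurrences:
  assumes "concat ws @ v = prefix_seq S n" "set ws \<subseteq> W" "finite W" "0 < d"
  shows "(\<Sum>w\<leftarrow>ws. long_length d w) \<le> (\<Sum>w\<in>W. long_length d w * occurrences S n w)"
proof -
  have "(\<Sum>w\<leftarrow>ws. long_length d w) = (\<Sum>w\<in>W. count_list ws w * long_length d w)"
    using assms(2,3) by (rule sum_list_map_eq_sum_count2)
  also have "\<dots> \<le> (\<Sum>w\<in>W. long_length d w * occurrences S n w)"
  proof (intro sum_mono)
    fix w
    show "count_list ws w * long_length d w \<le> long_length d w * occurrences S n w"
    proof (cases "d \<le> length w")
      case True
      with assms(4) have "w \<noteq> []" by auto
      then show ?thesis using count_list_le_occurrences[OF _ assms(1)] by (simp add: mult.commute)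
    qed (simp add: long_length_def)
  qed
  finally show ?thesis .
qed

lemma n_over_power_two_antimono:
  assumes "a \<le> j" "1 \<le> a"
  shows "real j / 2 ^ j \<le> real a / 2 ^ a"
  using assms(1)
proof (induction j rule: dec_induct)
  case (step j)
  have "real (Suc j) / 2 ^ Suc j \<le> real j / 2 ^ j"
    using step.hyps assms(2) by (simp add: field_simps)
  with step.IH show ?case by linarith
qed simp

lemma sum_long_length_over_power_le:
  assumes "0 < d"
  shows "(\<Sum>w\<in>W. real (long_length d w) / 2 ^ length w) \<le> real (card W) * (real d / 2 ^ d)"
proof -
  have "(\<Sum>w\<in>W. real (long_length d w) / 2 ^ length w) \<le> (\<Sum>w\<in>W. real d / 2 ^ d)"
    using n_over_power_two_antimono assms by (intro sum_mono) (simp add: long_length_def)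
  then show ?thesis by simp
qed

lemma normal_seq_occurrences:
  "normal_seq S \<Longrightarrow> (\<lambda>n. real (occurrences S n w) / real n) \<longlonglongrightarrow> 1 / 2 ^ length w"
  unfolding normal_seq_def occurrences_def by blast

lemma normal_seq_weighted_occurrences:
  assumes "normal_seq S"
  shows "(\<lambda>n. (\<Sum>w\<in>W. f w * real (occurrences S n w)) / real n) \<longlonglongrightarrow> (\<Sum>w\<in>W. f w / 2 ^ length w)"
proof -
  have "(\<lambda>n. \<Sum>w\<in>W. f w * (real (occurrences S n w) / real n)) \<longlonglongrightarrow> (\<Sum>w\<in>W. f w * (1 / 2 ^ length w))"
    using normal_seq_occurrences[OF assms] by (intro tendsto_sum tendsto_mult_left)
  then show ?thesis by (simp add: sum_divide_distrib)
qed

lemma length_concat_outputs_per_block_le: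
  assumes "wf_fst T" "q < fst_nstates T" "\<forall>u\<in>set us. length u = b" "0 < d"
    and "concat (outputs_per_block T q us) @ v = prefix_seq S n"
  shows "length (concat (outputs_per_block T q us))
           \<le> d * length us + (\<Sum>w\<in>block_outputs T b. long_length d w * occurrences S n w)"
proof -
  let ?ws = "outputs_per_block T q us"
  have "length (concat ?ws) \<le> d * length ?ws + (\<Sum>w\<leftarrow>?ws. long_length d w)"
    by (rule length_concat_le_short_long)
  also have "(\<Sum>w\<leftarrow>?ws. long_length d w) \<le> (\<Sum>w\<in>block_outputs T b. long_length d w * occurrences S n w)"
    using assms(5) set_outputs_per_block_subset[OF assms(1-3)] finite_block_outputs assms(4)
    by (rule sum_long_length_le_occurrences)
  finally show ?thesis by simp
qed

lemma prefix_length_le_block_occurrences: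
  assumes "wf_fst T" "0 < b" "0 < d" "fst_output T p = prefix_seq S n"
  shows "real n \<le> real d / real b * real (length p)
           + real (\<Sum>w\<in>block_outputs T b. long_length d w * occurrences S n w) + real (nu_bound T * b)"
proof -
  let ?E = "\<Sum>w\<in>block_outputs T b. long_length d w * occurrences S n w"
  obtain us r where p: "p = concat us @ r" and us: "\<forall>u\<in>set us. length u = b" and r: "length r < b"
    using split_into_blocks[OF assms(2)] by blast
  define q0 where "q0 = fst_start T"
  define ws where "ws = outputs_per_block T q0 us"
  define tail where "tail = fst_output_from T (foldl (fst_delta T) q0 (concat us)) r"
  have q0: "q0 < fst_nstates T" using assms(1) by (simp add: wf_fst_def q0_def)
  have S_n: "concat ws @ tail = prefix_seq S n"
    using assms(4) by (simp add: fst_output_eq_output_from p fst_output_from_append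
                                 fst_output_from_concat ws_def tail_def q0_def)
  have "length tail \<le> nu_bound T * length r"
    unfolding tail_def using assms(1) q0 foldl_fst_delta_less by (intro length_fst_output_from_le)
  also have "\<dots> \<le> nu_bound T * b" using r by simp
  finally have "n \<le> d * length us + ?E + nu_bound T * b"
    using arg_cong[OF S_n, of length]
      length_concat_outputs_per_block_le[OF assms(1) q0 us assms(3) S_n[unfolded ws_def]]
    by (simp add: ws_def)
  then have "real n \<le> real d * real (length us) + real ?E + real (nu_bound T * b)"
    by (metis of_nat_add of_nat_le_iff of_nat_mult)
  moreover have "length (concat us) = b * length us"
    using us by (simp add: length_concat sum_list_triv cong: map_cong)
  then have "real b * real (length us) \<le> real (length p)"
    using p by (simp flip: of_nat_mult)
  then have "real d / real b * (real b * real (length us)) \<le> real d / real b * real (length p)"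
    by (intro mult_left_mono) simp_all
  then have "real d * real (length us) \<le> real d / real b * real (length p)"
    using assms(2) by simp
  ultimately show ?thesis by linarith
qed

lemma exists_block_parameters:
  fixes K \<delta> \<eta> :: real
  assumes "0 < K" "0 < \<delta>" "0 < \<eta>"
  obtains b d :: nat where "0 < b" "0 < d" "(1 - \<delta>) * real d \<le> real b"
    "K * 2 ^ b * (real d / 2 ^ d) < \<eta>"
proof -
  define N where "N = nat \<lceil>1 / \<delta>\<rceil>"
  have "1 / \<delta> \<le> real N" unfolding N_def by (rule real_nat_ceiling_ge)
  then have N: "1 \<le> \<delta> * real N" using assms(2) by (simp add: field_simps)
  then have "0 < N" by (cases N) auto
  have "(\<lambda>c. real c / 2 ^ c) \<longlonglongrightarrow> 0"
    using lim_n_over_pown[of "2 :: real"] by simp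
  moreover have "0 < \<eta> / (K * (real N + 1))" using assms by simp
  ultimately have "\<forall>\<^sub>F c in sequentially. real c / 2 ^ c < \<eta> / (K * (real N + 1))"
    by (rule order_tendstoD(2))
  then obtain C where "\<forall>c\<ge>C. real c / 2 ^ c < \<eta> / (K * (real N + 1))"
    by (auto simp: eventually_sequentially)
  then obtain c where c: "0 < c" "real c / 2 ^ c < \<eta> / (K * (real N + 1))"
    using le_SucI by blast
  show ?thesis
  proof
    show "0 < N * c" using \<open>0 < N\<close> c(1) by simp
    show "0 < (N + 1) * c" using c(1) by simp
    have "real c \<le> \<delta> * real N * real c" using mult_right_mono[OF N, of "real c"] by simp
    moreover have "0 \<le> \<delta> * real c" using assms(2) by simp
    ultimately show "(1 - \<delta>) * real ((N + 1) * c) \<le> real (N * c)"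
      by (simp add: algebra_simps)
    have "K * 2 ^ (N * c) * (real ((N + 1) * c) / 2 ^ ((N + 1) * c)) = K * (real N + 1) * (real c / 2 ^ c)"
      by (simp add: power_add field_simps)
    also have "\<dots> < \<eta>"
      using c(2) assms(1) pos_less_divide_eq[of "K * (real N + 1)"] by (simp add: mult.commute)
    finally show "K * 2 ^ (N * c) * (real ((N + 1) * c) / 2 ^ ((N + 1) * c)) < \<eta>" .
  qed
qed

lemma normal_seq_long_occurrences_eventually_le:
  assumes "normal_seq S" "0 < d" "real (card W) * (real d / 2 ^ d) < \<eta>"
  shows "\<forall>\<^sub>F n in sequentially. real (\<Sum>w\<in>W. long_length d w * occurrences S n w) \<le> \<eta> * real n"
proof -
  have "(\<lambda>n. real (\<Sum>w\<in>W. long_length d w * occurrences S n w) / real n)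
          \<longlonglongrightarrow> (\<Sum>w\<in>W. real (long_length d w) / 2 ^ length w)"
    using normal_seq_weighted_occurrences[OF assms(1)] by simp
  moreover have "(\<Sum>w\<in>W. real (long_length d w) / 2 ^ length w) < \<eta>"
    using sum_long_length_over_power_le[OF assms(2)] assms(3) by (rule le_less_trans)
  ultimately have "\<forall>\<^sub>F n in sequentially. real (\<Sum>w\<in>W. long_length d w * occurrences S n w) / real n < \<eta>"
    by (rule order_tendstoD(2))
  then show ?thesis
    using eventually_gt_at_top[of 0] by eventually_elim (simp add: field_simps)
qed

lemma normal_seq_fst_incompressible:
  assumes "wf_fst T" "normal_seq S" "0 < \<epsilon>"
  shows "\<forall>\<^sub>F n in sequentially. \<forall>p. fst_output T p = prefix_seq S n \<longrightarrow> (1 - \<epsilon>) * real n \<le> real (length p)"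
proof (cases "\<epsilon> \<le> 1")
  case False
  have "(1 - \<epsilon>) * real n \<le> real (length p)" for n and p :: "bool list"
    using False mult_nonpos_nonneg[of "1 - \<epsilon>" "real n"] by simp
  then show ?thesis by (intro always_eventually allI impI)
next
  case True
  have "0 < real (fst_nstates T)" "0 < \<epsilon> / 2" "0 < \<epsilon> / 4"
    using assms(1,3) by (simp_all add: wf_fst_def)
  then obtain b d where b: "0 < b" and d: "0 < d" and bd: "(1 - \<epsilon> / 2) * real d \<le> real b"
    and small: "real (fst_nstates T) * 2 ^ b * (real d / 2 ^ d) < \<epsilon> / 4"
    by (rule exists_block_parameters)
  define E where "E = (\<lambda>n. \<Sum>w\<in>block_outputs T b. long_length d w * occurrences S n w)"
  have "real (card (block_outputs T b)) \<le> real (fst_nstates T * 2 ^ b)"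
    using card_block_outputs_le by (rule of_nat_mono)
  then have "real (card (block_outputs T b)) * (real d / 2 ^ d) \<le> real (fst_nstates T) * 2 ^ b * (real d / 2 ^ d)"
    by (intro mult_right_mono) simp_all
  with small have "real (card (block_outputs T b)) * (real d / 2 ^ d) < \<epsilon> / 4"
    by linarith
  then have "\<forall>\<^sub>F n in sequentially. real (E n) \<le> \<epsilon> / 4 * real n"
    unfolding E_def using assms(2) d by (intro normal_seq_long_occurrences_eventually_le)
  moreover have "\<forall>\<^sub>F n in sequentially. real (nu_bound T * b) / (\<epsilon> / 4) \<le> real n"
    by (rule eventually_ge_at_top[of "nat \<lceil>real (nu_bound T * b) / (\<epsilon> / 4)\<rceil>", THEN eventually_mono])
       linarith
  ultimately show ?thesis
  proof eventually_elim
    case (elim n)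
    have rest: "real (E n) + real (nu_bound T * b) \<le> \<epsilon> / 2 * real n"
      using elim assms(3) by (simp add: field_simps)
    show ?case
    proof (intro allI impI)
      fix p
      assume "fst_output T p = prefix_seq S n"
      then have "real n \<le> real d / real b * real (length p) + real (E n) + real (nu_bound T * b)"
        unfolding E_def using assms(1) b d by (rule prefix_length_le_block_occurrences[rotated 3])
      with rest have p: "(1 - \<epsilon> / 2) * real n \<le> real d / real b * real (length p)"
        by (simp add: algebra_simps)
      have "(1 - \<epsilon>) * real n \<le> (1 - \<epsilon> / 2) * ((1 - \<epsilon> / 2) * real n)"
        using assms(3) by (simp add: algebra_simps)
      also have "\<dots> \<le> real b / real d * ((1 - \<epsilon> / 2) * real n)"
      proof (rule mult_right_mono)
        show "1 - \<epsilon> / 2 \<le> real b / real d" using bd d by (simp add: field_simps)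
        show "0 \<le> (1 - \<epsilon> / 2) * real n" using True by simp
      qed
      also have "\<dots> \<le> real b / real d * (real d / real b * real (length p))"
        using p by (intro mult_left_mono) simp_all
      also have "\<dots> = real (length p)"
        using b d by simp
      finally show "(1 - \<epsilon>) * real n \<le> real (length p)" .
    qed
  qed
qed

lemma finite_fsts_of_bounded_size:
  fixes \<sigma> :: "fst \<Rightarrow> bool list"
  assumes "inj_on \<sigma> {T. wf_fst T}"
  shows "finite {T. wf_fst T \<and> length (\<sigma> T) \<le> k}"
proof (rule finite_imageD)
  have "\<sigma> ` {T. wf_fst T \<and> length (\<sigma> T) \<le> k} \<subseteq> {xs. set xs \<subseteq> UNIV \<and> length xs \<le> k}" by auto
  then show "finite (\<sigma> ` {T. wf_fst T \<and> length (\<sigma> T) \<le> k})"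
    by (rule finite_subset) (use finite_lists_length_le[of "UNIV :: bool set" k] in simp)
  show "inj_on \<sigma> {T. wf_fst T \<and> length (\<sigma> T) \<le> k}"
    using assms by (rule inj_on_subset) auto
qed

lemma FS_nonneg: "0 \<le> FS \<sigma> k x"
  unfolding FS_def by (rule INF_greatest) simp

lemma FS_antimono: "k \<le> k' \<Longrightarrow> FS \<sigma> k' x \<le> FS \<sigma> k x"
  unfolding FS_def by (rule INF_superset_mono) (use le_trans in blast, simp)

lemma FS_le_length: "length (\<sigma> id_fst) \<le> k \<Longrightarrow> FS \<sigma> k x \<le> ereal (real (length x))"
  unfolding FS_def using wf_id_fst fst_output_id_fst by (intro INF_lower) blast

lemma FS_normal_seq_lower_bound:
  assumes "inj_on \<sigma> {T. wf_fst T}" "normal_seq S" "0 < \<epsilon>"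
  shows "\<forall>\<^sub>F n in sequentially. ereal ((1 - \<epsilon>) * real n) \<le> FS \<sigma> k (prefix_seq S n)"
proof -
  have "\<forall>\<^sub>F n in sequentially. \<forall>T\<in>{T. wf_fst T \<and> length (\<sigma> T) \<le> k}.
          \<forall>p. fst_output T p = prefix_seq S n \<longrightarrow> (1 - \<epsilon>) * real n \<le> real (length p)"
    using finite_fsts_of_bounded_size[OF assms(1)]
    by (rule eventually_ball_finite) (use normal_seq_fst_incompressible assms(2,3) in blast)
  then show ?thesis
    by eventually_elim (unfold FS_def, rule INF_greatest, auto)
qed

lemma fs_shallowI:
  assumes "\<And>\<alpha>. 0 < \<alpha> \<Longrightarrow> \<exists>k. \<forall>k'. \<forall>\<^sub>F n in sequentially.
             FS \<sigma> k (prefix_seq S n) - FS \<sigma> k' (prefix_seq S n) < ereal (\<alpha> * real n)"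
  shows "fs_shallow \<sigma> S"
  unfolding fs_shallow_def fs_deep_def
proof clarify
  fix \<alpha> :: real
  assume "0 < \<alpha>" and deep: "\<forall>k. \<exists>k'. \<exists>\<^sub>\<infinity>n.
            ereal (\<alpha> * real n) \<le> FS \<sigma> k (prefix_seq S n) - FS \<sigma> k' (prefix_seq S n)"
  obtain k where k: "\<forall>k'. \<forall>\<^sub>F n in sequentially.
      FS \<sigma> k (prefix_seq S n) - FS \<sigma> k' (prefix_seq S n) < ereal (\<alpha> * real n)"
    using assms[OF \<open>0 < \<alpha>\<close>] by blast
  obtain k' where "\<exists>\<^sub>\<infinity>n. ereal (\<alpha> * real n) \<le> FS \<sigma> k (prefix_seq S n) - FS \<sigma> k' (prefix_seq S n)"
    using deep by blast
  moreover have "\<forall>\<^sub>\<infinity>n. \<not> ereal (\<alpha> * real n) \<le> FS \<sigma> k (prefix_seq S n) - FS \<sigma> k' (prefix_seq S n)"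
    using k[rule_format, of k'] by (simp add: cofinite_eq_sequentially not_le)
  ultimately show False by (simp add: not_INFM[symmetric])
qed

lemma Dim_FS_zero_imp_FS_eventually_less:
  assumes "Dim_FS \<sigma> S = 0" "0 < \<alpha>"
  obtains k where "\<forall>\<^sub>F n in sequentially. FS \<sigma> k (prefix_seq S n) < ereal (\<alpha> * real n)"
proof -
  define G where "G = (\<lambda>k. limsup (\<lambda>n. FS \<sigma> k (prefix_seq S n) / ereal (real n)))"
  have "antimono G"
  proof (rule antimonoI)
    fix k k' :: nat
    assume "k \<le> k'"
    have "\<forall>\<^sub>F n in sequentially.
        FS \<sigma> k' (prefix_seq S n) / ereal (real n) \<le> FS \<sigma> k (prefix_seq S n) / ereal (real n)"
      using eventually_gt_at_top[of 0]
      by eventually_elim (simp add: ereal_divide_right_mono FS_antimono[OF \<open>k \<le> k'\<close>])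
    then show "G k' \<le> G k" unfolding G_def by (rule Limsup_mono)
  qed
  then have "G \<longlonglongrightarrow> (INF k. G k)" by (rule LIMSEQ_INF)
  with assms(1) have "(INF k. G k) = 0" by (simp add: Dim_FS_def G_def limI)
  with assms(2) have "(INF k. G k) < ereal \<alpha>" by simp
  then obtain k where "G k < ereal \<alpha>" by (auto simp: INF_less_iff)
  then have "\<forall>\<^sub>F n in sequentially. FS \<sigma> k (prefix_seq S n) / ereal (real n) < ereal \<alpha>"
    unfolding G_def by (rule Limsup_lessD)
  then have "\<forall>\<^sub>F n in sequentially. FS \<sigma> k (prefix_seq S n) < ereal (\<alpha> * real n)"
    using eventually_gt_at_top[of 0]
    by eventually_elim (simp add: ereal_divide_less_iff mult.commute)
  then show thesis by (rule that)
qed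

lemma Dim_FS_zero_imp_fs_shallow:
  assumes "Dim_FS \<sigma> S = 0"
  shows "fs_shallow \<sigma> S"
proof (rule fs_shallowI)
  fix \<alpha> :: real
  assume "0 < \<alpha>"
  with assms obtain k where "\<forall>\<^sub>F n in sequentially. FS \<sigma> k (prefix_seq S n) < ereal (\<alpha> * real n)"
    by (rule Dim_FS_zero_imp_FS_eventually_less)
  then have "\<forall>\<^sub>F n in sequentially.
      FS \<sigma> k (prefix_seq S n) - FS \<sigma> k' (prefix_seq S n) < ereal (\<alpha> * real n)" for k'
    by eventually_elim (rule le_less_trans[OF ereal_diff_le_self[OF FS_nonneg]])
  then show "\<exists>k. \<forall>k'. \<forall>\<^sub>F n in sequentially.
      FS \<sigma> k (prefix_seq S n) - FS \<sigma> k' (prefix_seq S n) < ereal (\<alpha> * real n)" by blast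
qed

lemma normal_seq_imp_fs_shallow:
  assumes "inj_on \<sigma> {T. wf_fst T}" "normal_seq S"
  shows "fs_shallow \<sigma> S"
proof (rule fs_shallowI)
  fix \<alpha> :: real
  assume "0 < \<alpha>"
  then have "0 < \<alpha> / 2" by simp
  have "\<forall>\<^sub>F n in sequentially.
      FS \<sigma> (length (\<sigma> id_fst)) (prefix_seq S n) - FS \<sigma> k' (prefix_seq S n) < ereal (\<alpha> * real n)" for k'
    using FS_normal_seq_lower_bound[OF assms \<open>0 < \<alpha> / 2\<close>, of k'] eventually_gt_at_top[of 0]
  proof eventually_elim
    case (elim n)
    have "FS \<sigma> (length (\<sigma> id_fst)) (prefix_seq S n) - FS \<sigma> k' (prefix_seq S n)
            \<le> ereal (real n) - ereal ((1 - \<alpha> / 2) * real n)"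
      using FS_le_length[of \<sigma> "length (\<sigma> id_fst)" "prefix_seq S n"] elim(1)
      by (intro ereal_minus_mono) simp_all
    also have "\<dots> < ereal (\<alpha> * real n)" using \<open>0 < \<alpha>\<close> elim(2) by (simp add: algebra_simps)
    finally show ?case .
  qed
  then show "\<exists>k. \<forall>k'. \<forall>\<^sub>F n in sequentially.
      FS \<sigma> k (prefix_seq S n) - FS \<sigma> k' (prefix_seq S n) < ereal (\<alpha> * real n)" by blast
qed

theorem proposition1:
  fixes \<sigma> :: "fst \<Rightarrow> bool list" and S :: "nat \<Rightarrow> bool"
  assumes "inj_on \<sigma> {T. wf_fst T}"
  shows "(Dim_FS \<sigma> S = 0 \<longrightarrow> fs_shallow \<sigma> S) \<and> (normal_seq S \<longrightarrow> fs_shallow \<sigma> S)"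
  using Dim_FS_zero_imp_fs_shallow normal_seq_imp_fs_shallow[OF assms] by blast

end
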